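(* Let $\overline S(U)=\inf_{\theta\in\mathbb R^n}\{\Phi(\theta)+\sum_{j=1}^n\theta_jU_j\}$. Then $S(U)=\overline S(U)$ for every $U$ for which $S(U)$ is defined.
   Context: Let $A$ be a finite or countable set, $\mathcal M_1^+(A)$ the probability distributions on $A$, $I(p)=\sum_a h_a(p_a)$ a generalised entropy (each $h_a:[0,1]\to\mathbb R$ continuous, strictly concave, $h_a(0)=h_a(1)=0$), $H_1,\dots,H_n:A\to\mathbb R$ bounded below, $\langle p,X\rangle=\sum_ap_aX(a)$. $p^*$ satisfies the variational principle with parameters $\theta\in\mathbb R^n$ if $+\infty>I(p^* )-\sum_j\theta_j\langle p^*,H_j\rangle\ge I(p)-\sum_j\theta_j\langle p,H_j\rangle$ for all $p\in\mathcal M_1^+(A)$. Let $\mathcal D$ be the set of $\theta\in\mathbb R^n$ for which such $p^*$ exists (it is unique), denoted $p_\theta$. For $U\in\mathbb R^n$ of the form $U_j=\langle p_\eta,H_j\rangle$ ($j=1,\dots,n$) for some $\eta\in\mathcal D$, define the thermodynamic entropy $S(U)=I(p_\eta)$ (independent of the choice of $\eta$). The Massieu function is $\Phi(\theta)=\sup_U\{S(U)-\sum_j\theta_jU_j\}$ for $\theta\in\mathbb R^n$, the supremum over all $U$ for which $S(U)$ is defined. *)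

theory Defs
  imports "HOL-Analysis.Analysis"
begin

text \<open>Setting: A is the (finite or countable) type 'a::countable; parameters indexed by
  a finite type 'n (so theta ranges over real^'n, i.e. R^n with n = CARD('n)).
  h a is the entropy contribution of the point a, H j the j-th observable.\<close>

definition strictly_concave_on :: "real set \<Rightarrow> (real \<Rightarrow> real) \<Rightarrow> bool" where
  "strictly_concave_on S f \<longleftrightarrow>
     (\<forall>x\<in>S. \<forall>y\<in>S. x \<noteq> y \<longrightarrow> (\<forall>t. 0 < t \<and> t < 1 \<longrightarrow>
        f ((1 - t) * x + t * y) > (1 - t) * f x + t * f y))"

definition gen_entropy_fun :: "('a \<Rightarrow> real \<Rightarrow> real) \<Rightarrow> bool" where
  "gen_entropy_fun h \<longleftrightarrow> (\<forall>a. continuous_on {0..1} (h a) \<and> strictly_concave_on {0..1} (h a)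
      \<and> h a 0 = 0 \<and> h a 1 = 0)"

definition prob_dists :: "('a::countable \<Rightarrow> real) set" where
  "prob_dists = {p. (\<forall>a. 0 \<le> p a) \<and> (p has_sum 1) UNIV}"

definition gen_entropy :: "('a \<Rightarrow> real \<Rightarrow> real) \<Rightarrow> ('a \<Rightarrow> real) \<Rightarrow> ereal" where
  "gen_entropy h p = enn2ereal (\<Sum>\<^sub>\<infinity>a. ennreal (h a (p a)))"

text \<open>Pairing <p,X> = sum_a p_a X(a) as an extended real: positive part minus negative part
  (the negative part is finite when X is bounded below).\<close>
definition pairing :: "('a \<Rightarrow> real) \<Rightarrow> ('a \<Rightarrow> real) \<Rightarrow> ereal" where
  "pairing p X = enn2ereal (\<Sum>\<^sub>\<infinity>a. ennreal (p a * X a)) - enn2ereal (\<Sum>\<^sub>\<infinity>a. ennreal (- (p a * X a)))"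

definition vterm :: "('n \<Rightarrow> 'a \<Rightarrow> real) \<Rightarrow> real^'n \<Rightarrow> ('a \<Rightarrow> real) \<Rightarrow> 'n \<Rightarrow> ereal" where
  "vterm H \<theta> p j = ereal (- (\<theta> $ j)) * pairing p (H j)"

definition free_fun :: "('a \<Rightarrow> real \<Rightarrow> real) \<Rightarrow> ('n::finite \<Rightarrow> 'a \<Rightarrow> real) \<Rightarrow> real^'n \<Rightarrow> ('a \<Rightarrow> real) \<Rightarrow> ereal" where
  "free_fun h H \<theta> p = gen_entropy h p + (\<Sum>j\<in>UNIV. vterm H \<theta> p j)"

text \<open>The functional is well defined (no +infinity - infinity conflict).\<close>
definition free_defined :: "('a \<Rightarrow> real \<Rightarrow> real) \<Rightarrow> ('n::finite \<Rightarrow> 'a \<Rightarrow> real) \<Rightarrow> real^'n \<Rightarrow> ('a \<Rightarrow> real) \<Rightarrow> bool" where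
  "free_defined h H \<theta> p \<longleftrightarrow>
     \<not> ((gen_entropy h p = \<infinity> \<or> (\<exists>j. vterm H \<theta> p j = \<infinity>)) \<and> (\<exists>j. vterm H \<theta> p j = - \<infinity>))"

definition var_principle :: "('a::countable \<Rightarrow> real \<Rightarrow> real) \<Rightarrow> ('n::finite \<Rightarrow> 'a \<Rightarrow> real) \<Rightarrow> real^'n \<Rightarrow> ('a \<Rightarrow> real) \<Rightarrow> bool" where
  "var_principle h H \<theta> q \<longleftrightarrow> q \<in> prob_dists \<and> free_defined h H \<theta> q \<and> free_fun h H \<theta> q < \<infinity> \<and>
     (\<forall>p\<in>prob_dists. free_defined h H \<theta> p \<longrightarrow> free_fun h H \<theta> p \<le> free_fun h H \<theta> q)"

definition param_domain :: "('a::countable \<Rightarrow> real \<Rightarrow> real) \<Rightarrow> ('n::finite \<Rightarrow> 'a \<Rightarrow> real) \<Rightarrow> (real^'n) set" where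
  "param_domain h H = {\<theta>. \<exists>q. var_principle h H \<theta> q}"

definition equil :: "('a::countable \<Rightarrow> real \<Rightarrow> real) \<Rightarrow> ('n::finite \<Rightarrow> 'a \<Rightarrow> real) \<Rightarrow> real^'n \<Rightarrow> ('a \<Rightarrow> real)" where
  "equil h H \<theta> = (THE q. var_principle h H \<theta> q)"

definition represents :: "('a::countable \<Rightarrow> real \<Rightarrow> real) \<Rightarrow> ('n::finite \<Rightarrow> 'a \<Rightarrow> real) \<Rightarrow> real^'n \<Rightarrow> real^'n \<Rightarrow> bool" where
  "represents h H \<eta> U \<longleftrightarrow> \<eta> \<in> param_domain h H \<and> (\<forall>j. pairing (equil h H \<eta>) (H j) = ereal (U $ j))"

definition S_dom :: "('a::countable \<Rightarrow> real \<Rightarrow> real) \<Rightarrow> ('n::finite \<Rightarrow> 'a \<Rightarrow> real) \<Rightarrow> (real^'n) set" where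
  "S_dom h H = {U. \<exists>\<eta>. represents h H \<eta> U}"

definition thermo_entropy :: "('a::countable \<Rightarrow> real \<Rightarrow> real) \<Rightarrow> ('n::finite \<Rightarrow> 'a \<Rightarrow> real) \<Rightarrow> real^'n \<Rightarrow> ereal" where
  "thermo_entropy h H U = gen_entropy h (equil h H (SOME \<eta>. represents h H \<eta> U))"

definition massieu :: "('a::countable \<Rightarrow> real \<Rightarrow> real) \<Rightarrow> ('n::finite \<Rightarrow> 'a \<Rightarrow> real) \<Rightarrow> real^'n \<Rightarrow> ereal" where
  "massieu h H \<theta> = (SUP U\<in>S_dom h H. thermo_entropy h H U - ereal (\<theta> \<bullet> U))"

definition S_bar :: "('a::countable \<Rightarrow> real \<Rightarrow> real) \<Rightarrow> ('n::finite \<Rightarrow> 'a \<Rightarrow> real) \<Rightarrow> real^'n \<Rightarrow> ereal" where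
  "S_bar h H U = (INF \<theta>. massieu h H \<theta> + ereal (\<theta> \<bullet> U))"

end

theory Submission
  imports Defs
begin

(* The inequality S(U) <= S_bar(U) is the Fenchel-Young inequality: by definition of the
   Massieu function, S(U) - theta.U <= Phi(theta) for every theta.  For the converse, let eta
   represent U, i.e. U_j = <p_eta, H_j>.  If eta' represents V, the variational principle for
   p_eta gives I(p_eta') - eta.V <= I(p_eta) - eta.U; hence Phi(eta) <= S(U) - eta.U and
   S_bar(U) <= Phi(eta) + eta.U <= S(U).  The same comparison shows that S(U) does not depend
   on the representing parameter.

   The real work is to justify that p_eta, defined by a definite description, really satisfies
   the variational principle, i.e. that the maximiser is unique.  This follows from strict
   concavity of I: at the midpoint of two maximisers the entropy increases strictly while the
   linear part is averaged, so the midpoint would beat both of them. *)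

lemma ennreal_max_zero: "ennreal (max x 0) = ennreal x"
  by (cases "x \<ge> 0") (auto simp: max_def ennreal_neg)

lemma ennreal_infsum_of_summable:
  fixes f :: "'a \<Rightarrow> real"
  assumes nn: "\<And>x. 0 \<le> f x" and sm: "f summable_on UNIV"
  shows "(\<Sum>\<^sub>\<infinity>x. ennreal (f x)) = ennreal (\<Sum>\<^sub>\<infinity>x. f x)"
proof -
  have "infsum (ennreal \<circ> f) UNIV = ennreal (infsum f UNIV)"
    by (rule infsum_comm_additive_general)
      (auto simp: sum_ennreal nn sm intro: continuous_on_ennreal)
  then show ?thesis by (simp add: comp_def)
qed

lemma summable_of_ennreal_infsum_finite:
  fixes f :: "'a \<Rightarrow> real"
  assumes nn: "\<And>x. 0 \<le> f x" and fin: "(\<Sum>\<^sub>\<infinity>x. ennreal (f x)) < \<infinity>"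
  shows "f summable_on UNIV"
proof (rule nonneg_bdd_above_summable_on)
  show "bdd_above (sum f ` {F. F \<subseteq> UNIV \<and> finite F})"
  proof (rule bdd_aboveI2)
    fix F :: "'a set" assume F: "F \<in> {F. F \<subseteq> UNIV \<and> finite F}"
    have "ennreal (sum f F) = (\<Sum>\<^sub>\<infinity>x\<in>F. ennreal (f x))" using F by (simp add: nn)
    also have "\<dots> \<le> (\<Sum>\<^sub>\<infinity>x. ennreal (f x))"
      by (rule infsum_mono_neutral) (auto intro: nonneg_summable_on_complete)
    finally have le: "ennreal (sum f F) \<le> (\<Sum>\<^sub>\<infinity>x. ennreal (f x))" .
    show "sum f F \<le> enn2real (\<Sum>\<^sub>\<infinity>x. ennreal (f x))"
      using enn2real_mono[OF le fin[unfolded infinity_ennreal_def]] by (simp add: nn sum_nonneg)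
  qed
qed (use nn in auto)

lemma parts_infsum_of_summable:
  fixes f :: "'a \<Rightarrow> real"
  assumes sm: "f summable_on UNIV"
  shows "enn2ereal (\<Sum>\<^sub>\<infinity>a. ennreal (f a)) - enn2ereal (\<Sum>\<^sub>\<infinity>a. ennreal (- f a))
           = ereal (\<Sum>\<^sub>\<infinity>a. f a)"
proof -
  define pos where "pos = (\<lambda>x. max (f x) 0)"
  define neg where "neg = (\<lambda>x. max (- f x) 0)"
  have abs: "(\<lambda>x. norm (f x)) summable_on UNIV"
    using sm summable_on_iff_abs_summable_on_real by blast
  have pos_sm: "pos summable_on UNIV" and neg_sm: "neg summable_on UNIV"
    by (rule summable_on_comparison_test[OF abs]; auto simp: pos_def neg_def)+
  have e_pos: "(\<Sum>\<^sub>\<infinity>a. ennreal (f a)) = ennreal (infsum pos UNIV)"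
    using ennreal_infsum_of_summable[of pos, OF _ pos_sm] by (simp add: pos_def ennreal_max_zero)
  have e_neg: "(\<Sum>\<^sub>\<infinity>a. ennreal (- f a)) = ennreal (infsum neg UNIV)"
    using ennreal_infsum_of_summable[of neg, OF _ neg_sm] by (simp add: neg_def ennreal_max_zero)
  have "f = (\<lambda>x. pos x + - neg x)" by (auto simp: pos_def neg_def fun_eq_iff max_def)
  then have "infsum f UNIV = infsum pos UNIV + - infsum neg UNIV"
    using infsum_add[OF pos_sm summable_on_uminus[THEN iffD2, OF neg_sm]] infsum_uminus[of neg UNIV]
    by simp
  moreover have "infsum pos UNIV \<ge> 0" "infsum neg UNIV \<ge> 0"
    by (auto intro!: infsum_nonneg simp: pos_def neg_def)
  ultimately show ?thesis unfolding e_pos e_neg by simp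
qed

lemma summable_of_finite_parts:
  fixes f :: "'a \<Rightarrow> real"
  assumes "(\<Sum>\<^sub>\<infinity>a. ennreal (f a)) < \<infinity>" "(\<Sum>\<^sub>\<infinity>a. ennreal (- f a)) < \<infinity>"
  shows "f summable_on UNIV"
proof -
  have pos: "(\<lambda>x. max (f x) 0) summable_on UNIV"
    by (rule summable_of_ennreal_infsum_finite) (use assms in \<open>auto simp: ennreal_max_zero\<close>)
  have neg: "(\<lambda>x. max (- f x) 0) summable_on UNIV"
    by (rule summable_of_ennreal_infsum_finite) (use assms in \<open>auto simp: ennreal_max_zero\<close>)
  have "f = (\<lambda>x. max (f x) 0 + - max (- f x) 0)" by (auto simp: fun_eq_iff max_def)
  then show ?thesis
    using summable_on_add[OF pos summable_on_uminus[THEN iffD2, OF neg]] by simp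
qed

lemma sum_MInfty:
  fixes f :: "'b \<Rightarrow> ereal"
  assumes "finite P" "\<forall>i\<in>P. f i \<noteq> \<infinity>" "i \<in> P" "f i = - \<infinity>"
  shows "sum f P = - \<infinity>"
  using assms
proof (induct P rule: finite_induct)
  case empty then show ?case by simp
next
  case (insert x A)
  have "sum f A \<noteq> \<infinity>" using insert sum_Pinfty[of f A] by auto
  then show ?case
    using insert by (cases "x = i"; cases "sum f A"; cases "f x") auto
qed

lemma ereal_sub_le_add: "(x::ereal) - ereal c \<le> M \<Longrightarrow> x \<le> M + ereal c"
  by (cases x; cases M) auto

lemma ereal_add_le_sub: "(M::ereal) \<le> x - ereal c \<Longrightarrow> M + ereal c \<le> x"
  by (cases x; cases M) auto

lemma prob_dists_bounds:
  assumes "q \<in> prob_dists" shows "0 \<le> q a" "q a \<le> 1"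
proof -
  show "0 \<le> q a" using assms by (auto simp: prob_dists_def)
  have "(q has_sum (sum q {a})) {a}" by (rule has_sum_finite) simp
  moreover have "(q has_sum 1) UNIV" using assms by (auto simp: prob_dists_def)
  ultimately show "q a \<le> 1"
    using has_sum_mono2 assms by (fastforce simp: prob_dists_def)
qed

lemma prob_dists_summable:
  assumes "q \<in> prob_dists" shows "q summable_on UNIV" "infsum q UNIV = 1"
  using assms by (auto simp: prob_dists_def summable_on_def infsumI)

definition midpoint_dist :: "('a \<Rightarrow> real) \<Rightarrow> ('a \<Rightarrow> real) \<Rightarrow> 'a \<Rightarrow> real" where
  "midpoint_dist p q = (\<lambda>a. (p a + q a) / 2)"

lemma midpoint_dist_prob:
  assumes p: "p \<in> prob_dists" and q: "q \<in> prob_dists"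
  shows "midpoint_dist p q \<in> prob_dists"
proof -
  have "((\<lambda>a. p a + q a) has_sum (1 + 1)) UNIV"
    using p q unfolding prob_dists_def by (intro has_sum_add) auto
  from has_sum_cmult_left[OF this, of "1/2"]
  have "(midpoint_dist p q has_sum 1) UNIV" by (simp add: midpoint_dist_def)
  then show ?thesis
    using prob_dists_bounds(1)[OF p] prob_dists_bounds(1)[OF q]
    by (simp add: prob_dists_def midpoint_dist_def)
qed

text \<open>Point masses are distributions of entropy zero; they show that a maximiser of the
  variational functional has a finite value.\<close>

lemma point_mass:
  assumes g: "gen_entropy_fun h"
  shows "(\<lambda>a. if a = b then 1 else 0::real) \<in> prob_dists"
    and "gen_entropy h (\<lambda>a. if a = b then 1 else 0) = 0"
    and "pairing (\<lambda>a. if a = b then 1 else 0) X = ereal (X b)"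
proof -
  show "(\<lambda>a. if a = b then 1 else 0::real) \<in> prob_dists"
    unfolding prob_dists_def
    by (auto intro!: has_sum_finite_neutralI[where B="{b}"] split: if_splits)
  have "(\<lambda>a. ennreal (h a (if a = b then 1 else 0))) = (\<lambda>a. 0)"
    using g by (auto simp: fun_eq_iff gen_entropy_fun_def)
  then show "gen_entropy h (\<lambda>a. if a = b then 1 else 0) = 0"
    unfolding gen_entropy_def using enn2ereal_ennreal[of 0] by simp
  have hs: "((\<lambda>a. (if a = b then 1 else 0) * X a) has_sum X b) UNIV"
    by (rule has_sum_finite_neutralI[where B="{b}"]) auto
  then have "(\<lambda>a. (if a = b then 1 else 0) * X a) summable_on UNIV"
    by (auto simp: summable_on_def)
  then show "pairing (\<lambda>a. if a = b then 1 else 0) X = ereal (X b)"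
    unfolding pairing_def using parts_infsum_of_summable infsumI[OF hs] by metis
qed

lemma pairing_neg_part_finite:
  assumes q: "q \<in> prob_dists" and b: "bdd_below (range X)"
  shows "(\<Sum>\<^sub>\<infinity>a. ennreal (- (q a * X a))) < \<infinity>"
proof -
  obtain c where c: "\<And>a. c \<le> X a" using b by (auto simp: bdd_below_def)
  define d where "d = max 0 (- c)"
  have d0: "d \<ge> 0" by (simp add: d_def)
  have le: "- (q a * X a) \<le> q a * d" for a
  proof -
    have "- X a \<le> d" using c[of a] by (simp add: d_def)
    then have "q a * (- X a) \<le> q a * d"
      using prob_dists_bounds(1)[OF q] by (intro mult_left_mono) auto
    then show ?thesis by simp
  qed
  have "(\<Sum>\<^sub>\<infinity>a. ennreal (- (q a * X a))) \<le> (\<Sum>\<^sub>\<infinity>a. ennreal (q a * d))"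
    by (rule infsum_mono) (auto intro: ennreal_leI le nonneg_summable_on_complete)
  also have "\<dots> = ennreal (\<Sum>\<^sub>\<infinity>a. q a * d)"
    by (rule ennreal_infsum_of_summable)
      (use prob_dists_bounds(1)[OF q] d0 prob_dists_summable[OF q]
        in \<open>auto intro: summable_on_cmult_left\<close>)
  also have "\<dots> = ennreal d" using prob_dists_summable[OF q] by (simp add: infsum_cmult_left)
  finally show ?thesis
    unfolding infinity_ennreal_def using ennreal_less_top[of d] by (rule order.strict_trans1)
qed

lemma pairing_real_summable:
  assumes q: "q \<in> prob_dists" and b: "bdd_below (range X)" and p: "pairing q X = ereal s"
  shows "(\<lambda>a. q a * X a) summable_on UNIV" and "s = (\<Sum>\<^sub>\<infinity>a. q a * X a)"
proof -
  have neg: "(\<Sum>\<^sub>\<infinity>a. ennreal (- (q a * X a))) < \<infinity>" by (rule pairing_neg_part_finite[OF q b])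
  then obtain r where r: "(\<Sum>\<^sub>\<infinity>a. ennreal (- (q a * X a))) = ennreal r" "r \<ge> 0"
    unfolding infinity_ennreal_def less_top_ennreal by blast
  have pos: "(\<Sum>\<^sub>\<infinity>a. ennreal (q a * X a)) < \<infinity>"
  proof (rule ccontr)
    assume "\<not> ?thesis"
    then have "(\<Sum>\<^sub>\<infinity>a. ennreal (q a * X a)) = top"
      unfolding infinity_ennreal_def using top.not_eq_extremum by blast
    then have "pairing q X = \<infinity>" unfolding pairing_def r(1) using r(2) by simp
    then show False using p by simp
  qed
  show sm: "(\<lambda>a. q a * X a) summable_on UNIV"
    by (rule summable_of_finite_parts[OF pos]) (use neg in simp)
  show "s = (\<Sum>\<^sub>\<infinity>a. q a * X a)"
    using parts_infsum_of_summable[OF sm] p unfolding pairing_def by simp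
qed

lemma pairing_midpoint:
  assumes q1: "q1 \<in> prob_dists" and q2: "q2 \<in> prob_dists" and b: "bdd_below (range X)"
    and p1: "pairing q1 X = ereal s1" and p2: "pairing q2 X = ereal s2"
  shows "pairing (midpoint_dist q1 q2) X = ereal ((s1 + s2) / 2)"
proof -
  note sm1 = pairing_real_summable[OF q1 b p1] and sm2 = pairing_real_summable[OF q2 b p2]
  have split: "(\<lambda>a. midpoint_dist q1 q2 a * X a) = (\<lambda>a. (q1 a * X a + q2 a * X a) * (1/2))"
    by (auto simp: fun_eq_iff field_simps midpoint_dist_def)
  have sum12: "(\<lambda>a. q1 a * X a + q2 a * X a) summable_on UNIV"
    by (rule summable_on_add[OF sm1(1) sm2(1)])
  have sm: "(\<lambda>a. midpoint_dist q1 q2 a * X a) summable_on UNIV"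
    unfolding split by (rule summable_on_cmult_left[OF sum12])
  have "(\<Sum>\<^sub>\<infinity>a. midpoint_dist q1 q2 a * X a) = (s1 + s2) / 2"
    unfolding split infsum_cmult_left[OF sum12] infsum_add[OF sm1(1) sm2(1)] sm1(2) sm2(2) by simp
  then show ?thesis unfolding pairing_def using parts_infsum_of_summable[OF sm] by simp
qed

text \<open>Consequences of the axioms on the entropy function: it is nonnegative on \<open>[0,1]\<close>
  (it lies above the chord through \<open>(0,0)\<close> and \<open>(1,0)\<close>) and strictly midpoint concave.\<close>

lemma entropy_fun_props:
  assumes g: "gen_entropy_fun h"
  shows entropy_fun_nonneg: "\<And>a t. 0 \<le> t \<Longrightarrow> t \<le> 1 \<Longrightarrow> 0 \<le> h a t"
    and entropy_fun_mid_strict: "\<And>a x y. 0 \<le> x \<Longrightarrow> x \<le> 1 \<Longrightarrow> 0 \<le> y \<Longrightarrow> y \<le> 1 \<Longrightarrow> x \<noteq> y \<Longrightarrow>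
         (h a x + h a y) / 2 < h a ((x + y) / 2)"
    and entropy_fun_mid: "\<And>a x y. 0 \<le> x \<Longrightarrow> x \<le> 1 \<Longrightarrow> 0 \<le> y \<Longrightarrow> y \<le> 1 \<Longrightarrow>
         (h a x + h a y) / 2 \<le> h a ((x + y) / 2)"
proof -
  have sc: "\<And>a. strictly_concave_on {0..1} (h a)" and z: "\<And>a. h a 0 = 0"
    and o: "\<And>a. h a 1 = 0"
    using g by (auto simp: gen_entropy_fun_def)
  show mid: "(h a x + h a y) / 2 < h a ((x + y) / 2)"
    if "0 \<le> x" "x \<le> 1" "0 \<le> y" "y \<le> 1" "x \<noteq> y" for a x y
  proof -
    have "h a ((1 - 1/2) * x + 1/2 * y) > (1 - 1/2) * h a x + 1/2 * h a y"
      using that by (intro sc[of a, unfolded strictly_concave_on_def, rule_format]) auto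
    then show ?thesis by (simp add: field_simps)
  qed
  show "(h a x + h a y) / 2 \<le> h a ((x + y) / 2)"
    if "0 \<le> x" "x \<le> 1" "0 \<le> y" "y \<le> 1" for a x y
    using mid[of x y a] that by (cases "x = y") auto
  show "0 \<le> h a t" if "0 \<le> t" "t \<le> 1" for a t
  proof (cases "t = 0 \<or> t = 1")
    case True then show ?thesis using z o by auto
  next
    case False
    then have "h a ((1 - t) * 0 + t * 1) > (1 - t) * h a 0 + t * h a 1"
      using that by (intro sc[of a, unfolded strictly_concave_on_def, rule_format]) auto
    then show ?thesis using z o by simp
  qed
qed

lemma entropy_real_summable:
  assumes g: "gen_entropy_fun h" and q: "q \<in> prob_dists" and fin: "gen_entropy h q \<noteq> \<infinity>"
  shows "(\<lambda>a. h a (q a)) summable_on UNIV"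
    and "gen_entropy h q = ereal (\<Sum>\<^sub>\<infinity>a. h a (q a))"
proof -
  have nn: "\<And>a. 0 \<le> h a (q a)" using entropy_fun_nonneg[OF g] prob_dists_bounds[OF q] by auto
  have "(\<Sum>\<^sub>\<infinity>a. ennreal (h a (q a))) \<noteq> top"
    using fin unfolding gen_entropy_def by (metis enn2ereal_top)
  then have lt: "(\<Sum>\<^sub>\<infinity>a. ennreal (h a (q a))) < \<infinity>"
    unfolding infinity_ennreal_def using top.not_eq_extremum by blast
  show sm: "(\<lambda>a. h a (q a)) summable_on UNIV" by (rule summable_of_ennreal_infsum_finite[OF nn lt])
  show "gen_entropy h q = ereal (\<Sum>\<^sub>\<infinity>a. h a (q a))"
    unfolding gen_entropy_def ennreal_infsum_of_summable[OF nn sm]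
    using infsum_nonneg[of UNIV "\<lambda>a. h a (q a)"] nn by simp
qed

lemma entropy_midpoint_strict:
  assumes g: "gen_entropy_fun h" and q1: "q1 \<in> prob_dists" and q2: "q2 \<in> prob_dists"
    and ne: "q1 \<noteq> q2"
    and I1: "gen_entropy h q1 = ereal I1" and I2: "gen_entropy h q2 = ereal I2"
  shows "ereal ((I1 + I2) / 2) < gen_entropy h (midpoint_dist q1 q2)"
proof (cases "gen_entropy h (midpoint_dist q1 q2) = \<infinity>")
  case False
  define m where "m = midpoint_dist q1 q2"
  obtain a0 where a0: "q1 a0 \<noteq> q2 a0" using ne by auto
  note s1 = entropy_real_summable[OF g q1] and s2 = entropy_real_summable[OF g q2]
  note sm = entropy_real_summable[OF g midpoint_dist_prob[OF q1 q2] False, folded m_def]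
  have "((\<lambda>a. (h a (q1 a) + h a (q2 a)) * (1/2)) has_sum ((I1 + I2) * (1/2))) UNIV"
    by (intro has_sum_cmult_left has_sum_add)
      (use s1 s2 I1 I2 in \<open>auto intro: has_sum_infsum\<close>)
  then have "((\<lambda>a. (h a (q1 a) + h a (q2 a)) / 2) has_sum ((I1 + I2) / 2)) UNIV" by simp
  then have "(I1 + I2) / 2 < (\<Sum>\<^sub>\<infinity>a. h a (m a))"
  proof (rule has_sum_strict_mono)
    show "((\<lambda>a. h a (m a)) has_sum (\<Sum>\<^sub>\<infinity>a. h a (m a))) UNIV" using sm(1) by (rule has_sum_infsum)
    show "(h x (q1 x) + h x (q2 x)) / 2 \<le> h x (m x)" if "x \<in> UNIV" for x
      unfolding m_def midpoint_dist_def
      by (rule entropy_fun_mid[OF g]) (use prob_dists_bounds[OF q1] prob_dists_bounds[OF q2] in auto)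
    show "(h a0 (q1 a0) + h a0 (q2 a0)) / 2 < h a0 (m a0)"
      unfolding m_def midpoint_dist_def
      by (rule entropy_fun_mid_strict[OF g])
        (use prob_dists_bounds[OF q1] prob_dists_bounds[OF q2] a0 in auto)
  qed simp
  then show ?thesis using sm(2) by (simp add: m_def)
qed simp

lemma vterm_midpoint:
  assumes q1: "q1 \<in> prob_dists" and q2: "q2 \<in> prob_dists" and b: "bdd_below (range (H j))"
    and r1: "vterm H \<theta> q1 j = ereal r1" and r2: "vterm H \<theta> q2 j = ereal r2"
  shows "vterm H \<theta> (midpoint_dist q1 q2) j = ereal ((r1 + r2) / 2)"
proof (cases "\<theta> $ j = 0")
  case True
  then show ?thesis using r1 r2 by (simp add: vterm_def zero_ereal_def[symmetric])
next
  case False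
  have real_pairing: "\<exists>s. pairing q (H j) = ereal s \<and> r = - (\<theta> $ j) * s"
    if "vterm H \<theta> q j = ereal r" for q r
    using that False by (cases "pairing q (H j)") (auto simp: vterm_def split: if_splits)
  obtain s1 where s1: "pairing q1 (H j) = ereal s1" "r1 = - (\<theta> $ j) * s1"
    using real_pairing[OF r1] by blast
  obtain s2 where s2: "pairing q2 (H j) = ereal s2" "r2 = - (\<theta> $ j) * s2"
    using real_pairing[OF r2] by blast
  show ?thesis
    using pairing_midpoint[OF q1 q2 b s1(1) s2(1)] s1(2) s2(2)
    by (simp add: vterm_def field_simps)
qed

text \<open>At a maximiser of the variational principle the functional is finite: the entropy is
  real and every term \<open>-\<theta>\<^sub>j \<langle>q,H\<^sub>j\<rangle>\<close> is real (it cannot be \<open>-\<infinity>\<close>, since a point mass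
  already attains a finite value).\<close>

lemma var_principle_finite:
  assumes g: "gen_entropy_fun h" and v: "var_principle h H \<theta> q"
  shows "\<exists>I. gen_entropy h q = ereal I" and "\<And>j. \<exists>r. vterm H \<theta> q j = ereal r"
proof -
  define d :: "'a \<Rightarrow> real" where "d = (\<lambda>a. if a = undefined then 1 else 0)"
  note d = point_mass[OF g, of undefined, folded d_def]
  have vd: "\<And>j. vterm H \<theta> d j = ereal (- (\<theta> $ j) * H j undefined)"
    by (simp add: vterm_def d(3))
  have "free_defined h H \<theta> d" unfolding free_defined_def using vd d(2) by simp
  then have lower: "ereal (\<Sum>j\<in>UNIV. - (\<theta> $ j) * H j undefined) \<le> free_fun h H \<theta> q"
    using v d(1) vd d(2) unfolding var_principle_def free_fun_def by auto
  have upper: "free_fun h H \<theta> q < \<infinity>" using v unfolding var_principle_def by blast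
  have I0: "gen_entropy h q \<ge> 0" unfolding gen_entropy_def by (rule enn2ereal_nonneg)
  have nI: "gen_entropy h q \<noteq> \<infinity>" using upper by (auto simp: free_fun_def)
  then show "\<exists>I. gen_entropy h q = ereal I" using I0 by (cases "gen_entropy h q") auto
  have nP: "vterm H \<theta> q j \<noteq> \<infinity>" for j
    using upper sum_Pinfty[of "vterm H \<theta> q" UNIV] I0 by (auto simp: free_fun_def)
  have nM: "vterm H \<theta> q j \<noteq> - \<infinity>" for j
  proof
    assume "vterm H \<theta> q j = - \<infinity>"
    then have "(\<Sum>j\<in>UNIV. vterm H \<theta> q j) = - \<infinity>"
      using sum_MInfty[of UNIV "vterm H \<theta> q" j] nP by auto
    then have "free_fun h H \<theta> q = - \<infinity>"
      unfolding free_fun_def using nI I0 by (cases "gen_entropy h q") auto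
    then show False using lower by simp
  qed
  show "\<exists>r. vterm H \<theta> q j = ereal r" for j
    using nP[of j] nM[of j] by (cases "vterm H \<theta> q j") auto
qed

text \<open>The maximiser of the variational principle is unique: the midpoint of two maximisers
  would have a strictly larger value than both.\<close>

lemma var_principle_unique:
  assumes g: "gen_entropy_fun h" and bdd: "\<forall>j. bdd_below (range (H j))"
    and v1: "var_principle h H \<theta> q1" and v2: "var_principle h H \<theta> q2"
  shows "q1 = q2"
proof (rule ccontr)
  assume ne: "q1 \<noteq> q2"
  define m where "m = midpoint_dist q1 q2"
  have q1: "q1 \<in> prob_dists" and q2: "q2 \<in> prob_dists"
    using v1 v2 unfolding var_principle_def by blast+
  obtain I1 where I1: "gen_entropy h q1 = ereal I1" using var_principle_finite(1)[OF g v1] by blast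
  obtain I2 where I2: "gen_entropy h q2 = ereal I2" using var_principle_finite(1)[OF g v2] by blast
  obtain r1 where r1: "\<And>j. vterm H \<theta> q1 j = ereal (r1 j)"
    using var_principle_finite(2)[OF g v1] by metis
  obtain r2 where r2: "\<And>j. vterm H \<theta> q2 j = ereal (r2 j)"
    using var_principle_finite(2)[OF g v2] by metis
  define R1 R2 where "R1 = (\<Sum>j\<in>UNIV. r1 j)" and "R2 = (\<Sum>j\<in>UNIV. r2 j)"
  have rm: "vterm H \<theta> m j = ereal ((r1 j + r2 j) / 2)" for j
    unfolding m_def using bdd by (intro vterm_midpoint[OF q1 q2 _ r1 r2]) simp
  have "m \<in> prob_dists" unfolding m_def by (rule midpoint_dist_prob[OF q1 q2])
  moreover have "free_defined h H \<theta> m" unfolding free_defined_def rm by simp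
  ultimately have le1: "free_fun h H \<theta> m \<le> free_fun h H \<theta> q1"
    and le2: "free_fun h H \<theta> m \<le> free_fun h H \<theta> q2"
    using v1 v2 unfolding var_principle_def by blast+
  have F1: "free_fun h H \<theta> q1 = ereal (I1 + R1)" and F2: "free_fun h H \<theta> q2 = ereal (I2 + R2)"
    unfolding free_fun_def I1 I2 r1 r2 R1_def R2_def by simp_all
  have avg: "(\<Sum>j\<in>UNIV. (r1 j + r2 j) / 2) = (R1 + R2) / 2"
    unfolding R1_def R2_def by (simp add: sum_divide_distrib[symmetric] sum.distrib)
  have Fm: "free_fun h H \<theta> m = gen_entropy h m + ereal ((R1 + R2) / 2)"
    unfolding free_fun_def rm sum_ereal avg ..
  have "ereal ((I1 + I2) / 2) < gen_entropy h m"
    unfolding m_def by (rule entropy_midpoint_strict[OF g q1 q2 ne I1 I2])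
  then have "ereal ((I1 + I2) / 2 + (R1 + R2) / 2) < free_fun h H \<theta> m"
    unfolding Fm by (cases "gen_entropy h m") auto
  then have "(I1 + I2) / 2 + (R1 + R2) / 2 < I1 + R1" "(I1 + I2) / 2 + (R1 + R2) / 2 < I2 + R2"
    using le1 le2 unfolding F1 F2 by (auto dest: order.strict_trans2)
  then show False by argo
qed

lemma equil_var_principle:
  assumes g: "gen_entropy_fun h" and bdd: "\<forall>j. bdd_below (range (H j))"
    and t: "\<theta> \<in> param_domain h H"
  shows "var_principle h H \<theta> (equil h H \<theta>)"
proof -
  obtain q where q: "var_principle h H \<theta> q" using t unfolding param_domain_def by blast
  show ?thesis unfolding equil_def
    by (rule theI[of _ q]) (use q var_principle_unique[OF g bdd] in auto)
qed

lemma free_fun_at_expectations: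
  assumes p: "\<forall>j. pairing p (H j) = ereal (V $ j)"
  shows "free_defined h H \<theta> p" and "free_fun h H \<theta> p = gen_entropy h p - ereal (\<theta> \<bullet> V)"
proof -
  have vt: "vterm H \<theta> p j = ereal (- (\<theta> $ j) * V $ j)" for j
    using p by (simp add: vterm_def)
  show "free_defined h H \<theta> p" unfolding free_defined_def vt by simp
  have "(\<Sum>j\<in>UNIV. vterm H \<theta> p j) = ereal (- (\<theta> \<bullet> V))"
    unfolding vt by (simp add: inner_vec_def sum_negf)
  then show "free_fun h H \<theta> p = gen_entropy h p - ereal (\<theta> \<bullet> V)"
    unfolding free_fun_def by (cases "gen_entropy h p") auto
qed

lemma represents_compare:
  assumes g: "gen_entropy_fun h" and bdd: "\<forall>j. bdd_below (range (H j))"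
    and rU: "represents h H \<eta> U" and rV: "represents h H \<eta>' V"
  shows "gen_entropy h (equil h H \<eta>') - ereal (\<eta> \<bullet> V)
           \<le> gen_entropy h (equil h H \<eta>) - ereal (\<eta> \<bullet> U)"
proof -
  have vU: "var_principle h H \<eta> (equil h H \<eta>)"
    using rU by (intro equil_var_principle[OF g bdd]) (simp add: represents_def)
  have vV: "var_principle h H \<eta>' (equil h H \<eta>')"
    using rV by (intro equil_var_principle[OF g bdd]) (simp add: represents_def)
  have pU: "\<forall>j. pairing (equil h H \<eta>) (H j) = ereal (U $ j)"
    and pV: "\<forall>j. pairing (equil h H \<eta>') (H j) = ereal (V $ j)"
    using rU rV unfolding represents_def by simp_all
  have "equil h H \<eta>' \<in> prob_dists" using vV unfolding var_principle_def by blast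
  then have "free_fun h H \<eta> (equil h H \<eta>') \<le> free_fun h H \<eta> (equil h H \<eta>)"
    using vU free_fun_at_expectations(1)[OF pV] unfolding var_principle_def by blast
  then show ?thesis unfolding free_fun_at_expectations(2)[OF pU] free_fun_at_expectations(2)[OF pV] .
qed

lemma thermo_entropy_represents:
  assumes g: "gen_entropy_fun h" and bdd: "\<forall>j. bdd_below (range (H j))"
    and r: "represents h H \<eta> U"
  shows "thermo_entropy h H U = gen_entropy h (equil h H \<eta>)"
proof -
  define \<eta>' where "\<eta>' = (SOME \<eta>. represents h H \<eta> U)"
  have r': "represents h H \<eta>' U" unfolding \<eta>'_def using r by (rule someI)
  have cancel: "x - ereal c \<le> y - ereal c \<Longrightarrow> x \<le> y" for x y :: ereal and c
    by (cases x; cases y) auto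
  have "gen_entropy h (equil h H \<eta>') \<le> gen_entropy h (equil h H \<eta>)"
    by (rule cancel, rule represents_compare[OF g bdd r r'])
  moreover have "gen_entropy h (equil h H \<eta>) \<le> gen_entropy h (equil h H \<eta>')"
    by (rule cancel, rule represents_compare[OF g bdd r' r])
  ultimately show ?thesis unfolding thermo_entropy_def \<eta>'_def[symmetric] by simp
qed

lemma thermo_entropy_le_S_bar:
  assumes "U \<in> S_dom h H"
  shows "thermo_entropy h H U \<le> S_bar h H U"
  unfolding S_bar_def
proof (rule INF_greatest)
  fix \<theta>
  have "thermo_entropy h H U - ereal (\<theta> \<bullet> U) \<le> massieu h H \<theta>"
    unfolding massieu_def by (rule SUP_upper) (rule assms)
  then show "thermo_entropy h H U \<le> massieu h H \<theta> + ereal (\<theta> \<bullet> U)"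
    by (rule ereal_sub_le_add)
qed

lemma massieu_at_representing:
  assumes g: "gen_entropy_fun h" and bdd: "\<forall>j. bdd_below (range (H j))"
    and r: "represents h H \<eta> U"
  shows "massieu h H \<eta> \<le> thermo_entropy h H U - ereal (\<eta> \<bullet> U)"
  unfolding massieu_def
proof (rule SUP_least)
  fix V assume "V \<in> S_dom h H"
  then obtain \<eta>' where r': "represents h H \<eta>' V" unfolding S_dom_def by blast
  show "thermo_entropy h H V - ereal (\<eta> \<bullet> V) \<le> thermo_entropy h H U - ereal (\<eta> \<bullet> U)"
    unfolding thermo_entropy_represents[OF g bdd r] thermo_entropy_represents[OF g bdd r']
    by (rule represents_compare[OF g bdd r r'])
qed

theorem mainTheorem6:
  fixes h :: "'a::countable \<Rightarrow> real \<Rightarrow> real"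
    and H :: "'n::finite \<Rightarrow> 'a \<Rightarrow> real"
    and U :: "real^'n"
  assumes "gen_entropy_fun h"
    and "\<forall>j. bdd_below (range (H j))"
    and "U \<in> S_dom h H"
  shows "thermo_entropy h H U = S_bar h H U"
proof (rule antisym)
  show "thermo_entropy h H U \<le> S_bar h H U" by (rule thermo_entropy_le_S_bar[OF assms(3)])
  obtain \<eta> where r: "represents h H \<eta> U" using assms(3) unfolding S_dom_def by blast
  have "massieu h H \<eta> + ereal (\<eta> \<bullet> U) \<le> thermo_entropy h H U"
    by (rule ereal_add_le_sub, rule massieu_at_representing[OF assms(1,2) r])
  then show "S_bar h H U \<le> thermo_entropy h H U"
    unfolding S_bar_def by (rule order_trans[OF INF_lower[OF UNIV_I]])
qed

end
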